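(* Let $(\mathcal{X},\|\cdot\|)$ be a separable Banach space, let $\mu,\nu$ be Borel probability measures on $\mathcal{X}$ with $\nu$ having finite first moment and not a Dirac measure, and let $\pi\in\Pi(\mu,\nu)$. Define $$T^{\|\cdot\|}(\pi)=1-\frac{\int\int\int\|y-z\|\,\pi_{x_1}(dy)\,\pi_{x_1}(dz)\,\mu(dx_1)}{\int\int\|y-z\|\,\nu(dy)\,\nu(dz)}.$$ Then $T^{\|\cdot\|}(\pi)\le 2\,\overrightarrow{\mathcal{W}}(\pi)$, where $\overrightarrow{\mathcal{W}}$ is computed with the metric $d(x,y)=\|x-y\|$.
   Context: $\Pi(\mu,\nu)$ is the set of couplings of $\mu,\nu$; $\pi_{x_1}$ is the disintegration of $\pi$ w.r.t. the first coordinate. $\mathcal{W}(\alpha,\beta)=\inf_{\gamma\in\Pi(\alpha,\beta)}\int d(x,y)\,\gamma(dx,dy)$. The Wasserstein correlation coefficient is $\overrightarrow{\mathcal{W}}(\pi)=\int\mathcal{W}(\pi_{x_1},\nu)\,\mu(dx_1)\big/\int\int d(y,z)\,\nu(dy)\nu(dz)$. *)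

theory Defs
  imports "HOL-Probability.Probability"
begin

definition borel_prob :: "'a::topological_space measure \<Rightarrow> bool" where
  "borel_prob M \<longleftrightarrow> prob_space M \<and> sets M = sets borel"

definition couplings :: "'a::topological_space measure \<Rightarrow> 'a measure \<Rightarrow> ('a \<times> 'a) measure set" where
  "couplings \<alpha> \<beta> = {\<gamma>. borel_prob \<gamma> \<and> distr \<gamma> borel fst = \<alpha> \<and> distr \<gamma> borel snd = \<beta>}"

definition disintegration ::
  "('a::topological_space \<times> 'a) measure \<Rightarrow> 'a measure \<Rightarrow> ('a \<Rightarrow> 'a measure) \<Rightarrow> bool" where
  "disintegration \<pi> \<mu> K \<longleftrightarrow>
     K \<in> measurable borel (prob_algebra borel) \<and>
     (\<forall>A\<in>sets borel. \<forall>B\<in>sets borel.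
        emeasure \<pi> (A \<times> B) = (\<integral>\<^sup>+ x. indicator A x * emeasure (K x) B \<partial>\<mu>))"

definition wasserstein :: "('a \<Rightarrow> 'a \<Rightarrow> real) \<Rightarrow> 'a::topological_space measure \<Rightarrow> 'a measure \<Rightarrow> ennreal" where
  "wasserstein d \<alpha> \<beta> = (INF \<gamma>\<in>couplings \<alpha> \<beta>. \<integral>\<^sup>+ p. ennreal (d (fst p) (snd p)) \<partial>\<gamma>)"

text \<open>Wasserstein correlation coefficient of pi (given through its first marginal mu,
  second marginal nu and disintegration K).  All quantities involved are finite under
  the hypotheses of the theorem (finite first moment of nu).\<close>
definition wcorr :: "('a \<Rightarrow> 'a \<Rightarrow> real) \<Rightarrow> 'a::topological_space measure \<Rightarrow> 'a measure \<Rightarrow> ('a \<Rightarrow> 'a measure) \<Rightarrow> real" where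
  "wcorr d \<mu> \<nu> K =
     enn2real (\<integral>\<^sup>+ x. wasserstein d (K x) \<nu> \<partial>\<mu>) /
     enn2real (\<integral>\<^sup>+ y. \<integral>\<^sup>+ z. ennreal (d y z) \<partial>\<nu> \<partial>\<nu>)"

definition T_norm :: "'a::real_normed_vector measure \<Rightarrow> 'a measure \<Rightarrow> ('a \<Rightarrow> 'a measure) \<Rightarrow> real" where
  "T_norm \<mu> \<nu> K = 1 -
     enn2real (\<integral>\<^sup>+ x. \<integral>\<^sup>+ y. \<integral>\<^sup>+ z. ennreal (norm (y - z)) \<partial>K x \<partial>K x \<partial>\<mu>) /
     enn2real (\<integral>\<^sup>+ y. \<integral>\<^sup>+ z. ennreal (norm (y - z)) \<partial>\<nu> \<partial>\<nu>)"

end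

theory Submission
  imports Defs
begin

text \<open>Write \<open>D(\<alpha>)\<close> for the mean distance \<open>E \<parallel>Y - Y'\<parallel>\<close> of two independent samples
  of \<open>\<alpha>\<close>. For any coupling \<open>\<gamma>\<close> of \<open>\<alpha>\<close> and \<open>\<nu>\<close>, transporting each of the two samples
  of \<open>\<nu>\<close> back along \<open>\<gamma>\<close> and using the triangle inequality gives
  \<open>D(\<nu>) \<le> D(\<alpha>) + 2 \<integral>\<parallel>x - y\<parallel> d\<gamma>\<close>, hence \<open>D(\<nu>) \<le> D(\<alpha>) + 2 W(\<alpha>, \<nu>)\<close>.
  Taking \<open>\<alpha> = \<pi>\<^sub>x\<close> and averaging over \<open>x \<sim> \<mu>\<close> yields
  \<open>D(\<nu>) \<le> \<integral>D(\<pi>\<^sub>x) d\<mu> + 2 \<integral>W(\<pi>\<^sub>x, \<nu>) d\<mu>\<close>; dividing by \<open>D(\<nu>)\<close>, which is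
  finite by the moment assumption and positive because \<open>\<nu>\<close> is not a Dirac mass, is the claim.
  All averaged quantities are bounded by twice the first moment of \<open>\<nu> = \<mu> \<bind> \<pi>\<^sub>x\<close>,
  hence finite.\<close>

definition mean_distance :: "'a::real_normed_vector measure \<Rightarrow> ennreal" where
  "mean_distance M = (\<integral>\<^sup>+y. \<integral>\<^sup>+z. ennreal (norm (y - z)) \<partial>M \<partial>M)"

definition first_moment :: "'a::real_normed_vector measure \<Rightarrow> ennreal" where
  "first_moment M = (\<integral>\<^sup>+x. ennreal (norm x) \<partial>M)"

lemma borel_probD:
  assumes "borel_prob M"
  shows "prob_space M" and "sets M = sets borel"
  using assms by (auto simp: borel_prob_def)

lemma borel_prob_kernel:
  assumes "K \<in> M \<rightarrow>\<^sub>M prob_algebra borel" and "x \<in> space M"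
  shows "borel_prob (K x)"
  using measurable_space[OF assms] by (simp add: space_prob_algebra borel_prob_def)

lemma sets_couplings:
  fixes \<gamma> :: "('a::second_countable_topology \<times> 'a) measure"
  assumes "\<gamma> \<in> couplings \<alpha> \<beta>"
  shows "sets \<gamma> = sets (borel \<Otimes>\<^sub>M borel)"
  using assms by (simp add: couplings_def borel_prob_def borel_prod[symmetric])

lemma ennreal_norm_diff_triangle:
  fixes x y z :: "'a::real_normed_vector"
  shows "ennreal (norm (x - z)) \<le> ennreal (norm (x - y)) + ennreal (norm (y - z))"
  using dist_triangle[of x z y] by (simp add: dist_norm ennreal_leI flip: ennreal_plus)

lemma measurable_nn_integral_norm_diff:
  fixes M :: "'a::{real_normed_vector, second_countable_topology} measure"
  assumes "borel_prob M"
  shows "(\<lambda>y. \<integral>\<^sup>+z. ennreal (norm (y - z)) \<partial>M) \<in> borel_measurable borel"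
proof -
  interpret prob_space M using assms by (rule borel_probD)
  have [measurable_cong]: "sets M = sets borel" using assms by (rule borel_probD)
  show ?thesis by measurable
qed

lemma nn_integral_norm_diff_lipschitz:
  fixes M :: "'a::{real_normed_vector, second_countable_topology} measure"
  assumes "borel_prob M"
  shows "(\<integral>\<^sup>+z. ennreal (norm (y - z)) \<partial>M) \<le> (\<integral>\<^sup>+z. ennreal (norm (x - z)) \<partial>M) + ennreal (norm (x - y))"
proof -
  interpret prob_space M using assms by (rule borel_probD)
  have [measurable_cong]: "sets M = sets borel" using assms by (rule borel_probD)
  have "(\<integral>\<^sup>+z. ennreal (norm (y - z)) \<partial>M) \<le> (\<integral>\<^sup>+z. ennreal (norm (x - z)) + ennreal (norm (x - y)) \<partial>M)"
    by (intro nn_integral_mono) (metis ennreal_norm_diff_triangle norm_minus_commute add.commute)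
  also have "\<dots> = (\<integral>\<^sup>+z. ennreal (norm (x - z)) \<partial>M) + ennreal (norm (x - y))"
    by (subst nn_integral_add) (auto simp: emeasure_space_1)
  finally show ?thesis .
qed

lemma mean_distance_le_two_first_moment:
  fixes M :: "'a::{real_normed_vector, second_countable_topology} measure"
  assumes "borel_prob M"
  shows "mean_distance M \<le> 2 * first_moment M"
proof -
  interpret prob_space M using assms by (rule borel_probD)
  have [measurable_cong]: "sets M = sets borel" using assms by (rule borel_probD)
  have "mean_distance M \<le> (\<integral>\<^sup>+y. \<integral>\<^sup>+z. ennreal (norm y) + ennreal (norm z) \<partial>M \<partial>M)"
    unfolding mean_distance_def
    by (intro nn_integral_mono) (simp add: norm_triangle_ineq4 ennreal_leI flip: ennreal_plus)
  also have "\<dots> = (\<integral>\<^sup>+y. ennreal (norm y) + first_moment M \<partial>M)"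
    unfolding first_moment_def
    by (intro nn_integral_cong, subst nn_integral_add) (auto simp: emeasure_space_1)
  also have "\<dots> = 2 * first_moment M"
    by (subst nn_integral_add) (auto simp: emeasure_space_1 mult_2 first_moment_def)
  finally show ?thesis .
qed

lemma
  fixes \<gamma> :: "('a::second_countable_topology \<times> 'a) measure"
  assumes "\<gamma> \<in> couplings \<alpha> \<beta>" and [measurable]: "f \<in> borel_measurable borel"
  shows nn_integral_couplings_fst: "(\<integral>\<^sup>+x. f x \<partial>\<alpha>) = (\<integral>\<^sup>+p. f (fst p) \<partial>\<gamma>)"
    and nn_integral_couplings_snd: "(\<integral>\<^sup>+y. f y \<partial>\<beta>) = (\<integral>\<^sup>+p. f (snd p) \<partial>\<gamma>)"
proof -
  have [measurable_cong]: "sets \<gamma> = sets (borel \<Otimes>\<^sub>M borel)"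
    using assms(1) by (rule sets_couplings)
  from assms(1) have "\<alpha> = distr \<gamma> borel fst" and "\<beta> = distr \<gamma> borel snd"
    by (auto simp: couplings_def)
  then show "(\<integral>\<^sup>+x. f x \<partial>\<alpha>) = (\<integral>\<^sup>+p. f (fst p) \<partial>\<gamma>)"
    and "(\<integral>\<^sup>+y. f y \<partial>\<beta>) = (\<integral>\<^sup>+p. f (snd p) \<partial>\<gamma>)"
    by (simp_all add: nn_integral_distr)
qed

lemma nn_integral_couplings_lipschitz:
  fixes \<gamma> :: "('a::{real_normed_vector, second_countable_topology} \<times> 'a) measure"
  assumes \<gamma>: "\<gamma> \<in> couplings \<alpha> \<beta>" and [measurable]: "f \<in> borel_measurable borel"
    and lipschitz: "\<And>x y. f y \<le> f x + ennreal (norm (x - y))"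
  shows "(\<integral>\<^sup>+y. f y \<partial>\<beta>) \<le> (\<integral>\<^sup>+x. f x \<partial>\<alpha>) + (\<integral>\<^sup>+p. ennreal (norm (fst p - snd p)) \<partial>\<gamma>)"
proof -
  have [measurable_cong]: "sets \<gamma> = sets (borel \<Otimes>\<^sub>M borel)"
    using \<gamma> by (rule sets_couplings)
  have "(\<integral>\<^sup>+y. f y \<partial>\<beta>) = (\<integral>\<^sup>+p. f (snd p) \<partial>\<gamma>)"
    using \<gamma> by (rule nn_integral_couplings_snd) simp
  also have "\<dots> \<le> (\<integral>\<^sup>+p. f (fst p) + ennreal (norm (fst p - snd p)) \<partial>\<gamma>)"
    by (intro nn_integral_mono lipschitz)
  also have "\<dots> = (\<integral>\<^sup>+p. f (fst p) \<partial>\<gamma>) + (\<integral>\<^sup>+p. ennreal (norm (fst p - snd p)) \<partial>\<gamma>)"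
    by (rule nn_integral_add) simp_all
  also have "(\<integral>\<^sup>+p. f (fst p) \<partial>\<gamma>) = (\<integral>\<^sup>+x. f x \<partial>\<alpha>)"
    using \<gamma> by (rule nn_integral_couplings_fst[symmetric]) simp
  finally show ?thesis .
qed

lemma mean_distance_le_couplings:
  fixes \<alpha> \<beta> :: "'a::{real_normed_vector, second_countable_topology} measure"
  assumes "borel_prob \<alpha>" and "borel_prob \<beta>" and \<gamma>: "\<gamma> \<in> couplings \<alpha> \<beta>"
  shows "mean_distance \<beta> \<le> mean_distance \<alpha> + 2 * (\<integral>\<^sup>+p. ennreal (norm (fst p - snd p)) \<partial>\<gamma>)"
proof -
  interpret \<beta>: prob_space \<beta> using assms(2) by (rule borel_probD)
  have [measurable_cong]: "sets \<beta> = sets borel" using assms(2) by (rule borel_probD)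
  define c where "c = (\<integral>\<^sup>+p. ennreal (norm (fst p - snd p)) \<partial>\<gamma>)"
  define H where "H y = (\<integral>\<^sup>+z. ennreal (norm (y - z)) \<partial>\<alpha>)" for y
  have H_measurable: "H \<in> borel_measurable borel"
    unfolding H_def using assms(1) by (rule measurable_nn_integral_norm_diff)
  have inner: "(\<integral>\<^sup>+z. ennreal (norm (y - z)) \<partial>\<beta>) \<le> H y + c" for y
    unfolding H_def c_def
    by (rule nn_integral_couplings_lipschitz[OF \<gamma>]) (simp_all add: ennreal_norm_diff_triangle)
  have outer: "(\<integral>\<^sup>+y. H y \<partial>\<beta>) \<le> mean_distance \<alpha> + c"
    unfolding mean_distance_def H_def[symmetric] c_def
    by (rule nn_integral_couplings_lipschitz[OF \<gamma> H_measurable])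
      (simp add: H_def nn_integral_norm_diff_lipschitz[OF assms(1)])
  have "mean_distance \<beta> \<le> (\<integral>\<^sup>+y. H y + c \<partial>\<beta>)"
    unfolding mean_distance_def by (intro nn_integral_mono inner)
  also have "\<dots> = (\<integral>\<^sup>+y. H y \<partial>\<beta>) + c"
    using H_measurable by (subst nn_integral_add) (simp_all add: \<beta>.emeasure_space_1)
  also have "\<dots> \<le> mean_distance \<alpha> + c + c"
    using outer by (rule add_right_mono)
  finally show ?thesis
    by (simp add: c_def mult_2 ac_simps)
qed

lemma ennreal_half_le_iff: "(a::ennreal) / 2 \<le> b \<longleftrightarrow> a \<le> 2 * b"
proof
  assume "a / 2 \<le> b"
  then have "2 * (a / 2) \<le> 2 * b" by (rule mult_left_mono) simp
  then show "a \<le> 2 * b" by (simp add: ennreal_times_divide mult.commute[of 2] mult_divide_eq_ennreal)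
next
  assume "a \<le> 2 * b"
  then have "a / 2 \<le> 2 * b / 2" by (rule divide_right_mono_ennreal)
  then show "a / 2 \<le> b" by (simp add: mult.commute[of 2] mult_divide_eq_ennreal)
qed

lemma half_mean_distance_diff_le_wasserstein:
  fixes \<alpha> \<beta> :: "'a::{real_normed_vector, second_countable_topology} measure"
  assumes "borel_prob \<alpha>" and "borel_prob \<beta>" and "mean_distance \<beta> < \<infinity>"
  shows "(mean_distance \<beta> - mean_distance \<alpha>) / 2 \<le> wasserstein (\<lambda>x y. norm (x - y)) \<alpha> \<beta>"
  unfolding wasserstein_def
proof (rule INF_greatest)
  fix \<gamma> assume "\<gamma> \<in> couplings \<alpha> \<beta>"
  then have "mean_distance \<beta> \<le> mean_distance \<alpha> + 2 * (\<integral>\<^sup>+p. ennreal (norm (fst p - snd p)) \<partial>\<gamma>)"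
    by (rule mean_distance_le_couplings[OF assms(1,2)])
  with assms(3) show "(mean_distance \<beta> - mean_distance \<alpha>) / 2 \<le> (\<integral>\<^sup>+p. ennreal (norm (fst p - snd p)) \<partial>\<gamma>)"
    by (auto simp: ennreal_half_le_iff ennreal_minus_le_iff)
qed

lemma pair_measure_in_couplings:
  fixes \<alpha> \<beta> :: "'a::second_countable_topology measure"
  assumes "borel_prob \<alpha>" and "borel_prob \<beta>"
  shows "\<alpha> \<Otimes>\<^sub>M \<beta> \<in> couplings \<alpha> \<beta>"
proof -
  interpret \<alpha>: prob_space \<alpha> using assms(1) by (rule borel_probD)
  interpret \<beta>: prob_space \<beta> using assms(2) by (rule borel_probD)
  have sets_\<alpha>: "sets \<alpha> = sets borel" and sets_\<beta>: "sets \<beta> = sets borel"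
    using assms by (simp_all add: borel_probD)
  have "distr (\<alpha> \<Otimes>\<^sub>M \<beta>) borel fst = distr (\<alpha> \<Otimes>\<^sub>M \<beta>) \<alpha> fst"
    by (rule distr_cong) (simp_all add: sets_\<alpha>)
  also have "\<dots> = \<alpha>" by (rule \<beta>.distr_pair_fst)
  finally have fst_marginal: "distr (\<alpha> \<Otimes>\<^sub>M \<beta>) borel fst = \<alpha>" .
  have "distr (\<alpha> \<Otimes>\<^sub>M \<beta>) \<beta> snd = \<beta>"
  proof (rule measure_eqI)
    fix A assume A: "A \<in> sets (distr (\<alpha> \<Otimes>\<^sub>M \<beta>) \<beta> snd)"
    then have "emeasure (distr (\<alpha> \<Otimes>\<^sub>M \<beta>) \<beta> snd) A = emeasure (\<alpha> \<Otimes>\<^sub>M \<beta>) (space \<alpha> \<times> A)"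
      by (auto simp: emeasure_distr space_pair_measure dest: sets.sets_into_space
          intro!: arg_cong2[where f=emeasure])
    with A show "emeasure (distr (\<alpha> \<Otimes>\<^sub>M \<beta>) \<beta> snd) A = emeasure \<beta> A"
      by (simp add: \<beta>.emeasure_pair_measure_Times \<alpha>.emeasure_space_1)
  qed simp
  moreover have "distr (\<alpha> \<Otimes>\<^sub>M \<beta>) borel snd = distr (\<alpha> \<Otimes>\<^sub>M \<beta>) \<beta> snd"
    by (rule distr_cong) (simp_all add: sets_\<beta>)
  ultimately have snd_marginal: "distr (\<alpha> \<Otimes>\<^sub>M \<beta>) borel snd = \<beta>" by simp
  have "sets (\<alpha> \<Otimes>\<^sub>M \<beta>) = sets borel"
    using sets_pair_measure_cong[OF sets_\<alpha> sets_\<beta>] by (metis borel_prod)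
  with fst_marginal snd_marginal show ?thesis
    by (simp add: couplings_def borel_prob_def prob_space_pair \<alpha>.prob_space_axioms \<beta>.prob_space_axioms)
qed

lemma wasserstein_le_first_moments:
  fixes \<alpha> \<beta> :: "'a::{real_normed_vector, second_countable_topology} measure"
  assumes "borel_prob \<alpha>" and "borel_prob \<beta>"
  shows "wasserstein (\<lambda>x y. norm (x - y)) \<alpha> \<beta> \<le> first_moment \<alpha> + first_moment \<beta>"
proof -
  have \<gamma>: "\<alpha> \<Otimes>\<^sub>M \<beta> \<in> couplings \<alpha> \<beta>" using assms by (rule pair_measure_in_couplings)
  have [measurable_cong]: "sets (\<alpha> \<Otimes>\<^sub>M \<beta>) = sets (borel \<Otimes>\<^sub>M borel)"
    using \<gamma> by (rule sets_couplings)
  have "wasserstein (\<lambda>x y. norm (x - y)) \<alpha> \<beta> \<le> (\<integral>\<^sup>+p. ennreal (norm (fst p - snd p)) \<partial>(\<alpha> \<Otimes>\<^sub>M \<beta>))"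
    unfolding wasserstein_def using \<gamma> by (rule INF_lower)
  also have "\<dots> \<le> (\<integral>\<^sup>+p. ennreal (norm (fst p)) + ennreal (norm (snd p)) \<partial>(\<alpha> \<Otimes>\<^sub>M \<beta>))"
    by (intro nn_integral_mono) (simp add: norm_triangle_ineq4 ennreal_leI flip: ennreal_plus)
  also have "\<dots> = (\<integral>\<^sup>+p. ennreal (norm (fst p)) \<partial>(\<alpha> \<Otimes>\<^sub>M \<beta>)) + (\<integral>\<^sup>+p. ennreal (norm (snd p)) \<partial>(\<alpha> \<Otimes>\<^sub>M \<beta>))"
    by (rule nn_integral_add) simp_all
  also have "\<dots> = first_moment \<alpha> + first_moment \<beta>"
    unfolding first_moment_def
    using nn_integral_couplings_fst[OF \<gamma>] nn_integral_couplings_snd[OF \<gamma>] by simp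
  finally show ?thesis .
qed

lemma measurable_first_moment_kernel:
  fixes K :: "'b \<Rightarrow> 'a::{real_normed_vector, second_countable_topology} measure"
  assumes [measurable]: "K \<in> M \<rightarrow>\<^sub>M subprob_algebra borel"
  shows "(\<lambda>x. first_moment (K x)) \<in> borel_measurable M"
  unfolding first_moment_def
  by (rule nn_integral_measurable_subprob_algebra2[where f="\<lambda>x y. ennreal (norm y)"]) measurable

lemma measurable_mean_distance_kernel:
  fixes K :: "'b \<Rightarrow> 'a::{real_normed_vector, second_countable_topology} measure"
  assumes K[measurable]: "K \<in> M \<rightarrow>\<^sub>M subprob_algebra borel"
  shows "(\<lambda>x. mean_distance (K x)) \<in> borel_measurable M"
proof -
  have "(\<lambda>p. \<integral>\<^sup>+z. ennreal (norm (snd p - z)) \<partial>K (fst p)) \<in> borel_measurable (M \<Otimes>\<^sub>M borel)"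
    by (rule nn_integral_measurable_subprob_algebra2[where f="\<lambda>p z. ennreal (norm (snd p - z))"])
      measurable
  then have "(\<lambda>(x, y). \<integral>\<^sup>+z. ennreal (norm (y - z)) \<partial>K x) \<in> borel_measurable (M \<Otimes>\<^sub>M borel)"
    by (simp add: case_prod_beta')
  then show ?thesis
    unfolding mean_distance_def by (rule nn_integral_measurable_subprob_algebra2[OF _ K])
qed

lemma first_moment_bind:
  fixes K :: "'b \<Rightarrow> 'a::{real_normed_vector, second_countable_topology} measure"
  assumes "K \<in> M \<rightarrow>\<^sub>M subprob_algebra borel"
  shows "first_moment (M \<bind> K) = (\<integral>\<^sup>+x. first_moment (K x) \<partial>M)"
  unfolding first_moment_def by (rule nn_integral_bind[OF _ assms]) simp

lemma couplings_disintegration_bind: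
  fixes \<pi> :: "('a::second_countable_topology \<times> 'a) measure"
  assumes "\<pi> \<in> couplings \<mu> \<nu>" and "disintegration \<pi> \<mu> K"
  shows "\<nu> = \<mu> \<bind> K"
proof -
  from assms(1) have \<mu>: "\<mu> = distr \<pi> borel fst" and \<nu>: "\<nu> = distr \<pi> borel snd"
    and [measurable_cong]: "sets \<pi> = sets (borel \<Otimes>\<^sub>M borel)"
    by (auto simp: couplings_def sets_couplings)
  from assms(2) have K: "K \<in> borel \<rightarrow>\<^sub>M prob_algebra borel"
    and rectangles: "\<And>A B. A \<in> sets borel \<Longrightarrow> B \<in> sets borel \<Longrightarrow>
        emeasure \<pi> (A \<times> B) = (\<integral>\<^sup>+ x. indicator A x * emeasure (K x) B \<partial>\<mu>)"
    by (auto simp: disintegration_def)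
  have space_\<mu>: "space \<mu> = UNIV" and sets_\<mu>: "sets \<mu> = sets borel" using \<mu> by simp_all
  have K_sub: "K \<in> \<mu> \<rightarrow>\<^sub>M subprob_algebra borel"
    using measurable_prob_algebraD[OF K] by (simp add: measurable_cong_sets[OF sets_\<mu> refl])
  have space_\<pi>: "space \<pi> = UNIV"
    using sets_eq_imp_space_eq[OF \<open>sets \<pi> = sets (borel \<Otimes>\<^sub>M borel)\<close>] by (simp add: space_pair_measure)
  show ?thesis
  proof (rule measure_eqI)
    show "sets \<nu> = sets (\<mu> \<bind> K)"
      using \<nu> K_sub by (simp add: sets_bind_measurable space_\<mu>)
  next
    fix B assume "B \<in> sets \<nu>"
    then have B: "B \<in> sets borel" using \<nu> by simp
    have "emeasure \<nu> B = emeasure \<pi> (UNIV \<times> B)"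
      using B by (simp add: \<nu> emeasure_distr space_\<pi> vimage_snd)
    also have "\<dots> = (\<integral>\<^sup>+ x. emeasure (K x) B \<partial>\<mu>)"
      using rectangles[OF _ B, of UNIV] by simp
    also have "\<dots> = emeasure (\<mu> \<bind> K) B"
      using K_sub B by (simp add: emeasure_bind space_\<mu>)
    finally show "emeasure \<nu> B = emeasure (\<mu> \<bind> K) B" .
  qed
qed

lemma nn_integral_mean_distance_kernel_le:
  fixes K :: "'b \<Rightarrow> 'a::{real_normed_vector, second_countable_topology} measure"
  assumes K: "K \<in> M \<rightarrow>\<^sub>M prob_algebra borel"
  shows "(\<integral>\<^sup>+x. mean_distance (K x) \<partial>M) \<le> 2 * first_moment (M \<bind> K)"
proof -
  have K_sub: "K \<in> M \<rightarrow>\<^sub>M subprob_algebra borel" using K by (rule measurable_prob_algebraD)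
  have "(\<integral>\<^sup>+x. mean_distance (K x) \<partial>M) \<le> (\<integral>\<^sup>+x. 2 * first_moment (K x) \<partial>M)"
    using borel_prob_kernel[OF K] by (intro nn_integral_mono mean_distance_le_two_first_moment)
  also have "\<dots> = 2 * first_moment (M \<bind> K)"
    using K_sub by (simp add: nn_integral_cmult measurable_first_moment_kernel first_moment_bind)
  finally show ?thesis .
qed

lemma nn_integral_wasserstein_kernel_le:
  fixes K :: "'b \<Rightarrow> 'a::{real_normed_vector, second_countable_topology} measure"
  assumes "prob_space M" and K: "K \<in> M \<rightarrow>\<^sub>M prob_algebra borel" and "borel_prob \<nu>"
  shows "(\<integral>\<^sup>+x. wasserstein (\<lambda>x y. norm (x - y)) (K x) \<nu> \<partial>M) \<le> first_moment (M \<bind> K) + first_moment \<nu>"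
proof -
  interpret prob_space M by fact
  have K_sub: "K \<in> M \<rightarrow>\<^sub>M subprob_algebra borel" using K by (rule measurable_prob_algebraD)
  have "(\<integral>\<^sup>+x. wasserstein (\<lambda>x y. norm (x - y)) (K x) \<nu> \<partial>M) \<le> (\<integral>\<^sup>+x. first_moment (K x) + first_moment \<nu> \<partial>M)"
    using borel_prob_kernel[OF K] assms(3) by (intro nn_integral_mono wasserstein_le_first_moments)
  also have "\<dots> = first_moment (M \<bind> K) + first_moment \<nu>"
    using K_sub by (simp add: nn_integral_add measurable_first_moment_kernel first_moment_bind emeasure_space_1)
  finally show ?thesis .
qed

lemma mean_distance_le_nn_integral_wasserstein:
  fixes K :: "'b \<Rightarrow> 'a::{real_normed_vector, second_countable_topology} measure"
  assumes "prob_space M" and K: "K \<in> M \<rightarrow>\<^sub>M prob_algebra borel"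
    and "borel_prob \<nu>" and "mean_distance \<nu> < \<infinity>"
  shows "mean_distance \<nu> \<le>
    2 * (\<integral>\<^sup>+x. wasserstein (\<lambda>x y. norm (x - y)) (K x) \<nu> \<partial>M) + (\<integral>\<^sup>+x. mean_distance (K x) \<partial>M)"
proof -
  interpret prob_space M by fact
  define D where "D = mean_distance \<nu>"
  define A where "A x = mean_distance (K x)" for x
  define W where "W x = wasserstein (\<lambda>x y. norm (x - y)) (K x) \<nu>" for x
  \<comment> \<open>\<open>W\<close> is not known to be measurable, so all linear operations are done on \<open>(D - A x) / 2\<close>.\<close>
  have [measurable]: "A \<in> borel_measurable M"
    unfolding A_def using measurable_prob_algebraD[OF K] by (rule measurable_mean_distance_kernel)
  have "(\<integral>\<^sup>+x. D - A x \<partial>M) / 2 = (\<integral>\<^sup>+x. (D - A x) / 2 \<partial>M)"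
    by (simp add: nn_integral_divide)
  also have "\<dots> \<le> (\<integral>\<^sup>+x. W x \<partial>M)"
    unfolding D_def A_def W_def using borel_prob_kernel[OF K] assms(3,4)
    by (intro nn_integral_mono half_mean_distance_diff_le_wasserstein)
  finally have "(\<integral>\<^sup>+x. D - A x \<partial>M) \<le> 2 * (\<integral>\<^sup>+x. W x \<partial>M)"
    by (simp add: ennreal_half_le_iff)
  have "D = (\<integral>\<^sup>+x. D \<partial>M)" by (simp add: emeasure_space_1)
  also have "\<dots> \<le> (\<integral>\<^sup>+x. (D - A x) + A x \<partial>M)"
    by (intro nn_integral_mono) (simp add: diff_add_self_ennreal linorder_not_le less_imp_le)
  also have "\<dots> = (\<integral>\<^sup>+x. D - A x \<partial>M) + (\<integral>\<^sup>+x. A x \<partial>M)"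
    by (rule nn_integral_add) simp_all
  also have "\<dots> \<le> 2 * (\<integral>\<^sup>+x. W x \<partial>M) + (\<integral>\<^sup>+x. A x \<partial>M)"
    using \<open>(\<integral>\<^sup>+x. D - A x \<partial>M) \<le> 2 * (\<integral>\<^sup>+x. W x \<partial>M)\<close> by (rule add_right_mono)
  finally show ?thesis unfolding D_def A_def W_def .
qed

lemma (in prob_space) AE_eq_imp_eq_return:
  assumes "sets M = sets N" and "AE z in M. z = a"
  shows "M = return N a"
proof (rule measure_eqI)
  fix A assume A: "A \<in> sets M"
  have "emeasure M A = (\<integral>\<^sup>+z. indicator A z \<partial>M)" using A by simp
  also have "\<dots> = (\<integral>\<^sup>+z. indicator A a \<partial>M)"
    using assms(2) by (intro nn_integral_cong_AE) auto
  also have "\<dots> = emeasure (return N a) A"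
    using A assms(1) by (simp add: emeasure_space_1)
  finally show "emeasure M A = emeasure (return N a) A" .
qed (use assms(1) in simp)

lemma mean_distance_eq_0_imp_return:
  fixes M :: "'a::{real_normed_vector, second_countable_topology} measure"
  assumes "borel_prob M" and "mean_distance M = 0"
  obtains a where "M = return borel a"
proof -
  interpret prob_space M using assms(1) by (rule borel_probD)
  have sets_M[measurable_cong]: "sets M = sets borel" using assms(1) by (rule borel_probD)
  define F where "F = (\<lambda>y. \<integral>\<^sup>+z. ennreal (norm (y - z)) \<partial>M)"
  have [measurable]: "F \<in> borel_measurable borel"
    unfolding F_def using assms(1) by (rule measurable_nn_integral_norm_diff)
  have "AE y in M. F y = 0"
    using assms(2) by (subst nn_integral_0_iff_AE[symmetric]) (simp_all add: mean_distance_def F_def)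
  have "\<exists>a. F a = 0"
  proof (rule ccontr)
    assume "\<nexists>a. F a = 0"
    with \<open>AE y in M. F y = 0\<close> have "AE y in M. False" by simp
    then show False by (simp add: AE_False emeasure_space_1)
  qed
  then obtain a where "F a = 0" ..
  then have "AE z in M. z = a"
    unfolding F_def by (subst (asm) nn_integral_0_iff_AE) auto
  with sets_M have "M = return borel a" by (rule AE_eq_imp_eq_return)
  then show thesis by (rule that)
qed

lemma one_minus_ratio_le_enn2real:
  fixes d w a :: ennreal
  assumes "0 < d" and "d < \<infinity>" and "w < \<infinity>" and "a < \<infinity>" and "d \<le> 2 * w + a"
  shows "1 - enn2real a / enn2real d \<le> 2 * (enn2real w / enn2real d)"
proof -
  have "enn2real d \<le> enn2real (2 * w + a)"
    using assms by (intro enn2real_mono) (simp_all add: ennreal_mult_less_top)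
  also have "\<dots> = 2 * enn2real w + enn2real a"
    using assms by (simp add: enn2real_plus enn2real_mult ennreal_mult_less_top)
  finally have "enn2real d - enn2real a \<le> 2 * enn2real w" by simp
  moreover have "0 < enn2real d"
    using assms(1,2) by (simp add: enn2real_positive_iff)
  ultimately have "(enn2real d - enn2real a) / enn2real d \<le> 2 * enn2real w / enn2real d"
    by (intro divide_right_mono) simp_all
  with \<open>0 < enn2real d\<close> show ?thesis
    by (simp add: diff_divide_distrib)
qed

theorem mainTheorem6:
  fixes \<mu> \<nu> :: "'a::{banach, second_countable_topology} measure"
    and \<pi> :: "('a \<times> 'a) measure"
    and K :: "'a \<Rightarrow> 'a measure"
  assumes "borel_prob \<mu>" and "borel_prob \<nu>"
    and "(\<integral>\<^sup>+ x. ennreal (norm x) \<partial>\<nu>) < \<infinity>"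
    and "\<not> (\<exists>a. \<nu> = return borel a)"
    and "\<pi> \<in> couplings \<mu> \<nu>"
    and "disintegration \<pi> \<mu> K"
  shows "T_norm \<mu> \<nu> K \<le> 2 * wcorr (\<lambda>x y. norm (x - y)) \<mu> \<nu> K"
proof -
  have \<mu>: "prob_space \<mu>" "sets \<mu> = sets borel" using assms(1) by (simp_all add: borel_probD)
  have K: "K \<in> \<mu> \<rightarrow>\<^sub>M prob_algebra borel"
    using assms(6) by (simp add: disintegration_def measurable_cong_sets[OF \<mu>(2) refl])
  have \<nu>_bind: "\<nu> = \<mu> \<bind> K" using assms(5,6) by (rule couplings_disintegration_bind)
  have moment_finite: "2 * first_moment \<nu> < \<infinity>"
    using assms(3) by (simp add: first_moment_def ennreal_mult_less_top)
  have "mean_distance \<nu> \<le> 2 * first_moment \<nu>"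
    using assms(2) by (rule mean_distance_le_two_first_moment)
  then have mean_finite: "mean_distance \<nu> < \<infinity>"
    using moment_finite by (rule order.strict_trans1)
  have mean_pos: "0 < mean_distance \<nu>"
    using mean_distance_eq_0_imp_return[OF assms(2)] assms(4) by (auto simp: zero_less_iff_neq_zero)
  have "(\<integral>\<^sup>+x. mean_distance (K x) \<partial>\<mu>) \<le> 2 * first_moment \<nu>"
    using nn_integral_mean_distance_kernel_le[OF K] \<nu>_bind by simp
  moreover have "(\<integral>\<^sup>+x. wasserstein (\<lambda>x y. norm (x - y)) (K x) \<nu> \<partial>\<mu>) \<le> 2 * first_moment \<nu>"
    using nn_integral_wasserstein_kernel_le[OF \<mu>(1) K assms(2)] \<nu>_bind by (simp add: mult_2)
  moreover have "mean_distance \<nu> \<le> 2 * (\<integral>\<^sup>+x. wasserstein (\<lambda>x y. norm (x - y)) (K x) \<nu> \<partial>\<mu>)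
      + (\<integral>\<^sup>+x. mean_distance (K x) \<partial>\<mu>)"
    using \<mu>(1) K assms(2) mean_finite by (rule mean_distance_le_nn_integral_wasserstein)
  ultimately show ?thesis
    unfolding T_norm_def wcorr_def mean_distance_def[symmetric]
    using mean_pos mean_finite moment_finite
    by (intro one_minus_ratio_le_enn2real) (auto intro: order.strict_trans1)
qed

end
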